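(* Every locally stable commutative ring $R$ has stable range 2; that is, whenever $a,b,c\in R$ satisfy $aR+bR+cR=R$, there exist $y,z\in R$ such that $(a+cy)R+(b+cz)R=R$.
   Context: All rings are commutative with identity. A ring $S$ has stable range 1 if whenever $aS+bS=S$ there is $y\in S$ with $a+by$ a unit. $R$ is locally stable if whenever $a,b\in R$ with $aR+bR=R$ there is $y\in R$ such that $R/(a+by)R$ has stable range 1. *)

theory Defs
  imports "HOL-Algebra.QuotRing"
begin

definition ideal_sum2 :: "('a,'b) ring_scheme \<Rightarrow> 'a \<Rightarrow> 'a \<Rightarrow> 'a set" where
  "ideal_sum2 S a b =
     {a \<otimes>\<^bsub>S\<^esub> x \<oplus>\<^bsub>S\<^esub> b \<otimes>\<^bsub>S\<^esub> y | x y. x \<in> carrier S \<and> y \<in> carrier S}"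

definition ideal_sum3 :: "('a,'b) ring_scheme \<Rightarrow> 'a \<Rightarrow> 'a \<Rightarrow> 'a \<Rightarrow> 'a set" where
  "ideal_sum3 S a b c =
     {a \<otimes>\<^bsub>S\<^esub> x \<oplus>\<^bsub>S\<^esub> b \<otimes>\<^bsub>S\<^esub> y \<oplus>\<^bsub>S\<^esub> c \<otimes>\<^bsub>S\<^esub> z | x y z.
        x \<in> carrier S \<and> y \<in> carrier S \<and> z \<in> carrier S}"

definition stable_range_1 :: "('a,'b) ring_scheme \<Rightarrow> bool" where
  "stable_range_1 S \<longleftrightarrow>
     (\<forall>a\<in>carrier S. \<forall>b\<in>carrier S. ideal_sum2 S a b = carrier S \<longrightarrow>
        (\<exists>y\<in>carrier S. a \<oplus>\<^bsub>S\<^esub> b \<otimes>\<^bsub>S\<^esub> y \<in> Units S))"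

definition locally_stable :: "('a,'b) ring_scheme \<Rightarrow> bool" where
  "locally_stable R \<longleftrightarrow>
     (\<forall>a\<in>carrier R. \<forall>b\<in>carrier R. ideal_sum2 R a b = carrier R \<longrightarrow>
        (\<exists>y\<in>carrier R. stable_range_1 (R Quot (PIdl\<^bsub>R\<^esub> (a \<oplus>\<^bsub>R\<^esub> b \<otimes>\<^bsub>R\<^esub> y)))))"

end

theory Submission
  imports Defs
begin

text \<open>Write \<open>\<one> = a x + b y + c z\<close> and \<open>d = a x + c z\<close>, so that \<open>b\<close> and \<open>d\<close> are comaximal.
  Local stability yields \<open>t\<close> such that \<open>R/eR\<close> has stable range 1, where \<open>e = b + d t\<close>.
  Modulo \<open>e\<close> we have \<open>b \<equiv> -d t\<close>, hence \<open>\<one> \<equiv> d (\<one> - t y)\<close>, so \<open>a\<close> and \<open>c\<close> are comaximal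
  modulo \<open>e\<close>, and stable range 1 of \<open>R/eR\<close> gives \<open>y\<^sub>0\<close> making \<open>s = a + c y\<^sub>0\<close> a unit modulo \<open>e\<close>.
  Finally \<open>e = (b + c (z - y\<^sub>0 x) t) + s x t\<close>, so \<open>s\<close> is also comaximal with
  \<open>b + c (z - y\<^sub>0 x) t\<close>.\<close>

lemma (in cring) ideal_sum2_eq_carrier_iff:
  assumes "a \<in> carrier R" "b \<in> carrier R"
  shows "ideal_sum2 R a b = carrier R \<longleftrightarrow>
           (\<exists>x\<in>carrier R. \<exists>y\<in>carrier R. a \<otimes> x \<oplus> b \<otimes> y = \<one>)"
proof
  assume "ideal_sum2 R a b = carrier R"
  then have "\<one> \<in> ideal_sum2 R a b" by simp
  then show "\<exists>x\<in>carrier R. \<exists>y\<in>carrier R. a \<otimes> x \<oplus> b \<otimes> y = \<one>"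
    unfolding ideal_sum2_def by force
next
  assume "\<exists>x\<in>carrier R. \<exists>y\<in>carrier R. a \<otimes> x \<oplus> b \<otimes> y = \<one>"
  then obtain x y where xy: "x \<in> carrier R" "y \<in> carrier R" and one: "a \<otimes> x \<oplus> b \<otimes> y = \<one>"
    by blast
  show "ideal_sum2 R a b = carrier R"
  proof
    show "ideal_sum2 R a b \<subseteq> carrier R"
      unfolding ideal_sum2_def using assms by auto
    show "carrier R \<subseteq> ideal_sum2 R a b"
    proof
      fix q assume q: "q \<in> carrier R"
      have "q = (a \<otimes> x \<oplus> b \<otimes> y) \<otimes> q" using q by (simp add: one)
      also have "\<dots> = a \<otimes> (x \<otimes> q) \<oplus> b \<otimes> (y \<otimes> q)"
        using assms xy q by algebra
      finally show "q \<in> ideal_sum2 R a b"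
        unfolding ideal_sum2_def using xy q by blast
    qed
  qed
qed

lemma (in cring) ideal_sum3_eq_carrierE:
  assumes "ideal_sum3 R a b c = carrier R"
  obtains x y z where "x \<in> carrier R" "y \<in> carrier R" "z \<in> carrier R"
    and "a \<otimes> x \<oplus> b \<otimes> y \<oplus> c \<otimes> z = \<one>"
proof -
  have "\<one> \<in> ideal_sum3 R a b c" using assms by simp
  then show ?thesis using that unfolding ideal_sum3_def by force
qed

lemma (in cring) ideal_sum2_eq_carrier_if_unit_mod:
  assumes s: "s \<in> carrier R" and u: "u \<in> carrier R" and v: "v \<in> carrier R"
    and w: "w \<in> carrier R" and unit: "w \<otimes> s \<ominus> \<one> \<in> PIdl (u \<oplus> s \<otimes> v)"
  shows "ideal_sum2 R s u = carrier R"
proof -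
  obtain r where r: "r \<in> carrier R" and wr: "w \<otimes> s \<ominus> \<one> = r \<otimes> (u \<oplus> s \<otimes> v)"
    using unit unfolding cgenideal_def by blast
  have "s \<otimes> (w \<ominus> r \<otimes> v) \<oplus> u \<otimes> (\<ominus> r) = w \<otimes> s \<ominus> r \<otimes> (u \<oplus> s \<otimes> v)"
    using s u v w r by algebra
  also have "\<dots> = w \<otimes> s \<ominus> (w \<otimes> s \<ominus> \<one>)"
    unfolding wr ..
  also have "\<dots> = \<one>"
    using w s by algebra
  finally have "s \<otimes> (w \<ominus> r \<otimes> v) \<oplus> u \<otimes> (\<ominus> r) = \<one>" .
  moreover have "w \<ominus> r \<otimes> v \<in> carrier R" "\<ominus> r \<in> carrier R"
    using w r v by auto
  ultimately show ?thesis
    using ideal_sum2_eq_carrier_iff[OF s u] by blast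
qed

lemma (in ideal) carrier_Quot: "carrier (R Quot I) = (+>) I ` carrier R"
  unfolding FactRing_def A_RCOSETS_def' by auto

lemma (in cring) Units_Quot_iff:
  assumes I: "ideal I R" and s: "s \<in> carrier R"
  shows "I +> s \<in> Units (R Quot I) \<longleftrightarrow> (\<exists>w\<in>carrier R. w \<otimes> s \<ominus> \<one> \<in> I)"
proof -
  interpret I: ideal I R by (fact I)
  interpret h: ring_hom_cring R "R Quot I" "(+>) I"
    using I.rcos_ring_hom_cring is_cring by blast
  have "I +> s \<in> Units (R Quot I) \<longleftrightarrow>
          (\<exists>w\<in>carrier R. (I +> w) \<otimes>\<^bsub>R Quot I\<^esub> (I +> s) = \<one>\<^bsub>R Quot I\<^esub>)"
    using s unfolding Units_def I.carrier_Quot by (auto simp: h.S.m_comm)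
  also have "\<dots> \<longleftrightarrow> (\<exists>w\<in>carrier R. I +> (w \<otimes> s) = I +> \<one>)"
    using s by auto
  also have "\<dots> \<longleftrightarrow> (\<exists>w\<in>carrier R. w \<otimes> s \<ominus> \<one> \<in> I)"
    using s quotient_eq_iff_same_a_r_cos[OF I] by auto
  finally show ?thesis .
qed

lemma (in cring) ideal_sum2_Quot_eq_carrier_iff:
  assumes I: "ideal I R" and a: "a \<in> carrier R" and c: "c \<in> carrier R"
  shows "ideal_sum2 (R Quot I) (I +> a) (I +> c) = carrier (R Quot I) \<longleftrightarrow>
           (\<exists>x\<in>carrier R. \<exists>y\<in>carrier R. a \<otimes> x \<oplus> c \<otimes> y \<ominus> \<one> \<in> I)"
proof -
  interpret I: ideal I R by (fact I)
  interpret h: ring_hom_cring R "R Quot I" "(+>) I"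
    using I.rcos_ring_hom_cring is_cring by blast
  have "ideal_sum2 (R Quot I) (I +> a) (I +> c) = carrier (R Quot I) \<longleftrightarrow>
          (\<exists>x\<in>carrier R. \<exists>y\<in>carrier R.
             (I +> a) \<otimes>\<^bsub>R Quot I\<^esub> (I +> x) \<oplus>\<^bsub>R Quot I\<^esub> (I +> c) \<otimes>\<^bsub>R Quot I\<^esub> (I +> y)
               = \<one>\<^bsub>R Quot I\<^esub>)"
    using h.S.ideal_sum2_eq_carrier_iff a c unfolding I.carrier_Quot by simp
  also have "\<dots> \<longleftrightarrow> (\<exists>x\<in>carrier R. \<exists>y\<in>carrier R. I +> (a \<otimes> x \<oplus> c \<otimes> y) = I +> \<one>)"
    using a c by auto
  also have "\<dots> \<longleftrightarrow> (\<exists>x\<in>carrier R. \<exists>y\<in>carrier R. a \<otimes> x \<oplus> c \<otimes> y \<ominus> \<one> \<in> I)"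
    using a c quotient_eq_iff_same_a_r_cos[OF I] by auto
  finally show ?thesis .
qed

lemma (in cring) stable_range_1_Quot_unit_lift:
  assumes I: "ideal I R" and sr: "stable_range_1 (R Quot I)"
    and a: "a \<in> carrier R" and c: "c \<in> carrier R"
    and x: "x \<in> carrier R" and y: "y \<in> carrier R"
    and comax: "a \<otimes> x \<oplus> c \<otimes> y \<ominus> \<one> \<in> I"
  obtains y\<^sub>0 w where "y\<^sub>0 \<in> carrier R" "w \<in> carrier R" "w \<otimes> (a \<oplus> c \<otimes> y\<^sub>0) \<ominus> \<one> \<in> I"
proof -
  interpret I: ideal I R by (fact I)
  interpret h: ring_hom_cring R "R Quot I" "(+>) I"
    using I.rcos_ring_hom_cring is_cring by blast
  have "ideal_sum2 (R Quot I) (I +> a) (I +> c) = carrier (R Quot I)"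
    using ideal_sum2_Quot_eq_carrier_iff[OF I a c] x y comax by blast
  then obtain Y where "Y \<in> carrier (R Quot I)"
    and "(I +> a) \<oplus>\<^bsub>R Quot I\<^esub> (I +> c) \<otimes>\<^bsub>R Quot I\<^esub> Y \<in> Units (R Quot I)"
    using sr a c unfolding stable_range_1_def by blast
  then obtain y\<^sub>0 where y\<^sub>0: "y\<^sub>0 \<in> carrier R" and unit: "I +> (a \<oplus> c \<otimes> y\<^sub>0) \<in> Units (R Quot I)"
    using a c unfolding I.carrier_Quot by auto
  obtain w where "w \<in> carrier R" "w \<otimes> (a \<oplus> c \<otimes> y\<^sub>0) \<ominus> \<one> \<in> I"
    using Units_Quot_iff[OF I, of "a \<oplus> c \<otimes> y\<^sub>0"] unit a c y\<^sub>0 by blast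
  with y\<^sub>0 show ?thesis by (rule that)
qed

lemma (in cring) stable_range_2_if_locally_stable:
  assumes ls: "locally_stable R"
    and a: "a \<in> carrier R" and b: "b \<in> carrier R" and c: "c \<in> carrier R"
    and comax: "ideal_sum3 R a b c = carrier R"
  shows "\<exists>y\<in>carrier R. \<exists>z\<in>carrier R.
           ideal_sum2 R (a \<oplus> c \<otimes> y) (b \<oplus> c \<otimes> z) = carrier R"
proof -
  obtain x y z where x: "x \<in> carrier R" and y: "y \<in> carrier R" and z: "z \<in> carrier R"
    and one: "a \<otimes> x \<oplus> b \<otimes> y \<oplus> c \<otimes> z = \<one>"
    using ideal_sum3_eq_carrierE[OF comax] .
  define d where "d = a \<otimes> x \<oplus> c \<otimes> z"
  have d: "d \<in> carrier R" using a c x z d_def by simp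
  have "b \<otimes> y \<oplus> d \<otimes> \<one> = \<one>"
    unfolding d_def using one a b c x y z by algebra
  then have "ideal_sum2 R b d = carrier R"
    using ideal_sum2_eq_carrier_iff[OF b d] y one_closed by blast
  then obtain t where t: "t \<in> carrier R"
    and sr: "stable_range_1 (R Quot PIdl (b \<oplus> d \<otimes> t))"
    using ls b d unfolding locally_stable_def by blast
  define e where "e = b \<oplus> d \<otimes> t"
  have e: "e \<in> carrier R" using b d t e_def by simp
  have I: "ideal (PIdl e) R" by (rule cgenideal_ideal[OF e])
  define X where "X = x \<otimes> (\<one> \<ominus> t \<otimes> y)"
  define Y where "Y = z \<otimes> (\<one> \<ominus> t \<otimes> y)"
  have X: "X \<in> carrier R" and Y: "Y \<in> carrier R"
    using x y z t unfolding X_def Y_def by auto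
  have "a \<otimes> X \<oplus> c \<otimes> Y \<ominus> (a \<otimes> x \<oplus> b \<otimes> y \<oplus> c \<otimes> z) = (\<ominus> y) \<otimes> e"
    unfolding X_def Y_def e_def d_def using a b c x y z t by algebra
  then have "a \<otimes> X \<oplus> c \<otimes> Y \<ominus> \<one> \<in> PIdl e"
    unfolding cgenideal_def one using y by auto
  then obtain y\<^sub>0 w where y\<^sub>0: "y\<^sub>0 \<in> carrier R" and w: "w \<in> carrier R"
    and unit: "w \<otimes> (a \<oplus> c \<otimes> y\<^sub>0) \<ominus> \<one> \<in> PIdl e"
    using stable_range_1_Quot_unit_lift[OF I sr[folded e_def] a c X Y] by blast
  define s where "s = a \<oplus> c \<otimes> y\<^sub>0"
  define Z where "Z = (z \<ominus> y\<^sub>0 \<otimes> x) \<otimes> t"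
  have s: "s \<in> carrier R" and Z: "Z \<in> carrier R"
    and u: "b \<oplus> c \<otimes> Z \<in> carrier R" and xt: "x \<otimes> t \<in> carrier R"
    using a b c x z t y\<^sub>0 unfolding s_def Z_def by auto
  have "e = (b \<oplus> c \<otimes> Z) \<oplus> s \<otimes> (x \<otimes> t)"
    unfolding e_def d_def s_def Z_def using a b c x z t y\<^sub>0 by algebra
  then have "w \<otimes> s \<ominus> \<one> \<in> PIdl ((b \<oplus> c \<otimes> Z) \<oplus> s \<otimes> (x \<otimes> t))"
    using unit unfolding s_def by simp
  then have "ideal_sum2 R s (b \<oplus> c \<otimes> Z) = carrier R"
    by (rule ideal_sum2_eq_carrier_if_unit_mod[OF s u xt w])
  then show ?thesis
    using y\<^sub>0 Z unfolding s_def by blast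
qed

theorem lemma3p1:
  fixes R :: "('a, 'b) ring_scheme"
  assumes "cring R"
    and "locally_stable R"
    and "a \<in> carrier R" and "b \<in> carrier R" and "c \<in> carrier R"
    and "ideal_sum3 R a b c = carrier R"
  shows "\<exists>y\<in>carrier R. \<exists>z\<in>carrier R.
           ideal_sum2 R (a \<oplus>\<^bsub>R\<^esub> c \<otimes>\<^bsub>R\<^esub> y) (b \<oplus>\<^bsub>R\<^esub> c \<otimes>\<^bsub>R\<^esub> z) = carrier R"
  by (rule cring.stable_range_2_if_locally_stable[OF assms])

end
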